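(* Let $\mathcal{X}=\mathbb{R}^d$. Let $\widehat P_X,\widehat P'_X$ be empirical distributions of points $X_1,\dots,X_{n_1}$ and $X'_1,\dots,X'_{n_2}$ in $\mathbb{R}^d$, let $x,x'\in\mathbb{R}^d$, $\tilde x=(\widehat P_X,x)$, $\tilde x'=(\widehat P'_X,x')$. Let $k'_X(x,y)=\exp(-\|x-y\|^2/(2\sigma'^2))$, $\Psi(\widehat P)=\frac1{|\widehat P|}\sum_i k'_X(X_i,\cdot)$ its kernel mean embedding, and $$\bar k(\tilde x,\tilde x')=\exp\Big(-\frac{\|\Psi(\widehat P_X)-\Psi(\widehat P'_X)\|^2_{\mathcal{H}_{k'_X}}}{2\sigma_P^2}\Big)\exp\Big(-\frac{\|x-x'\|^2}{2\sigma_X^2}\Big).$$ Draw $w_1,\dots,w_L$ i.i.d. from $N(0,\sigma'^{-2}I_d)$ and set $Z_P(\widehat P_X)=\frac{1}{n_1\sqrt L}\sum_{i=1}^{n_1}[\cos(w_1^TX_i),\sin(w_1^TX_i),\dots,\cos(w_L^TX_i),\sin(w_L^TX_i)]\in\mathbb{R}^{2L}$ (and analogously $Z_P(\widehat P'_X)$ with $n_2$, $X'_j$). Let $u=(\sigma_XZ_P(\widehat P_X),\sigma_Px)$, $u'=(\sigma_XZ_P(\widehat P'_X),\sigma_Px')\in\mathbb{R}^{2L+d}$; draw $v_1,\dots,v_Q$ i.i.d. (independently of the $w_l$) from $N(0,(\sigma_P\sigma_X)^{-2}I_{2L+d})$, and let $\bar z(\tilde x)=\frac1{\sqrt Q}[\cos(v_1^Tu),\sin(v_1^Tu),\dots,\cos(v_Q^Tu),\sin(v_Q^Tu)]$,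 $\bar z(\tilde x')$ analogously with $u'$. Then for any $\epsilon_l>0,\epsilon_q>0$, $$P\big(|\bar k(\tilde x,\tilde x')-\bar z(\tilde x)^T\bar z(\tilde x')|\ge\epsilon_l+\epsilon_q\big)\le 2\exp\Big(-\frac{Q\epsilon_q^2}{2}\Big)+6n_1n_2\exp\Big(-\frac{L\epsilon^2}{2}\Big),$$ where $\epsilon=\frac{\sigma_P^2}{2}\log(1+\epsilon_l)$ and the probability is over the random features $w_l,v_q$.
   Context: $N(0,\Sigma)$ is the centred Gaussian; these are the spectral (Fourier) distributions of the Gaussian kernels $\exp(-\|x-y\|^2/(2s^2))$ with $s=\sigma'$ and $s=\sigma_P\sigma_X$ respectively (random Fourier features). $\|\Psi(\widehat P)-\Psi(\widehat P')\|^2$ is computed via $\langle\Psi(\widehat P),\Psi(\widehat P')\rangle=\frac1{n_1n_2}\sum_{i,j}k'_X(X_i,X'_j)$. *)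

theory Defs
  imports "HOL-Probability.Probability"
begin

text \<open>Points of R^d are represented as functions nat => real, coordinates j < d.\<close>

definition sqdist :: "nat \<Rightarrow> (nat \<Rightarrow> real) \<Rightarrow> (nat \<Rightarrow> real) \<Rightarrow> real" where
  "sqdist d x y = (\<Sum>j<d. (x j - y j)^2)"

definition dotp :: "nat \<Rightarrow> (nat \<Rightarrow> real) \<Rightarrow> (nat \<Rightarrow> real) \<Rightarrow> real" where
  "dotp d x y = (\<Sum>j<d. x j * y j)"

definition gauss_kernel :: "nat \<Rightarrow> real \<Rightarrow> (nat \<Rightarrow> real) \<Rightarrow> (nat \<Rightarrow> real) \<Rightarrow> real" where
  "gauss_kernel d s x y = exp (- sqdist d x y / (2 * s^2))"

text \<open>Inner product of kernel mean embeddings of two empirical distributions,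
  <Psi(P), Psi(P')> = 1/(n1 n2) sum_{i,j} k(X_i, X'_j).\<close>
definition kme_inner :: "nat \<Rightarrow> real \<Rightarrow> nat \<Rightarrow> (nat \<Rightarrow> nat \<Rightarrow> real) \<Rightarrow> nat \<Rightarrow> (nat \<Rightarrow> nat \<Rightarrow> real) \<Rightarrow> real" where
  "kme_inner d s n1 X n2 X' =
     (\<Sum>i<n1. \<Sum>j<n2. gauss_kernel d s (X i) (X' j)) / (real n1 * real n2)"

definition kme_sqdist :: "nat \<Rightarrow> real \<Rightarrow> nat \<Rightarrow> (nat \<Rightarrow> nat \<Rightarrow> real) \<Rightarrow> nat \<Rightarrow> (nat \<Rightarrow> nat \<Rightarrow> real) \<Rightarrow> real" where
  "kme_sqdist d s n1 X n2 X' =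
     kme_inner d s n1 X n1 X + kme_inner d s n2 X' n2 X' - 2 * kme_inner d s n1 X n2 X'"

definition kbar :: "nat \<Rightarrow> real \<Rightarrow> real \<Rightarrow> real \<Rightarrow> nat \<Rightarrow> (nat \<Rightarrow> nat \<Rightarrow> real) \<Rightarrow> (nat \<Rightarrow> real)
     \<Rightarrow> nat \<Rightarrow> (nat \<Rightarrow> nat \<Rightarrow> real) \<Rightarrow> (nat \<Rightarrow> real) \<Rightarrow> real" where
  "kbar d s' sP sX n1 X x n2 X' x' =
     exp (- kme_sqdist d s' n1 X n2 X' / (2 * sP^2)) * exp (- sqdist d x x' / (2 * sX^2))"

definition rff :: "nat \<Rightarrow> nat \<Rightarrow> (nat \<times> nat \<Rightarrow> real) \<Rightarrow> (nat \<Rightarrow> real) \<Rightarrow> nat \<Rightarrow> real" where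
  "rff m D W u k =
     (let l = k div 2; t = dotp m (\<lambda>j. W (l, j)) u in
      (if k mod 2 = 0 then cos t else sin t) / sqrt (real D))"

definition ZP :: "nat \<Rightarrow> nat \<Rightarrow> (nat \<times> nat \<Rightarrow> real) \<Rightarrow> nat \<Rightarrow> (nat \<Rightarrow> nat \<Rightarrow> real) \<Rightarrow> nat \<Rightarrow> real" where
  "ZP d L W n X k = (\<Sum>i<n. rff d L W (X i) k) / real n"

definition uvec :: "nat \<Rightarrow> nat \<Rightarrow> real \<Rightarrow> real \<Rightarrow> (nat \<times> nat \<Rightarrow> real) \<Rightarrow> nat \<Rightarrow> (nat \<Rightarrow> nat \<Rightarrow> real)
     \<Rightarrow> (nat \<Rightarrow> real) \<Rightarrow> nat \<Rightarrow> real" where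
  "uvec d L sP sX W n X x k =
     (if k < 2 * L then sX * ZP d L W n X k else sP * x (k - 2 * L))"

definition rf_measure :: "nat \<Rightarrow> nat \<Rightarrow> nat \<Rightarrow> real \<Rightarrow> real \<Rightarrow> real
     \<Rightarrow> ((nat \<times> nat \<Rightarrow> real) \<times> (nat \<times> nat \<Rightarrow> real)) measure" where
  "rf_measure d L Q s' sP sX =
     (PiM ({..<L} \<times> {..<d}) (\<lambda>_. density lborel (normal_density 0 (1 / s'))))
     \<Otimes>\<^sub>M (PiM ({..<Q} \<times> {..<2 * L + d}) (\<lambda>_. density lborel (normal_density 0 (1 / (sP * sX)))))"

end

theory Submission
  imports Defs
begin

text \<open>Conditionally on the first-stage frequencies \<open>W\<close>, the second-stage features are random
  Fourier features of the Gaussian kernel of width \<open>\<sigma>\<^sub>P \<sigma>\<^sub>X\<close> at the points \<open>u, u'\<close>: each of the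
  \<open>Q\<close> frequencies contributes a cosine in \<open>[-1, 1]\<close> whose mean is that kernel value (the
  characteristic function of the Gaussian), so Hoeffding's inequality gives the term
  \<open>2 exp (-Q \<epsilon>\<^sub>q\<^sup>2 / 2)\<close>. This kernel value factors as
  \<open>exp (-\<parallel>Z\<^sub>P - Z'\<^sub>P\<parallel>\<^sup>2 / (2 \<sigma>\<^sub>P\<^sup>2)) exp (-\<parallel>x - x'\<parallel>\<^sup>2 / (2 \<sigma>\<^sub>X\<^sup>2))\<close>, so it differs from \<open>kbar\<close> only
  through the estimate \<open>\<parallel>Z\<^sub>P - Z'\<^sub>P\<parallel>\<^sup>2\<close> of \<open>\<parallel>\<Psi> - \<Psi>'\<parallel>\<^sup>2\<close>. That estimate is the average over the \<open>L\<close>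
  first-stage frequencies of the squared distance of the two empirical characteristic
  functions, which lies in \<open>[0, 8]\<close> and has mean \<open>\<parallel>\<Psi> - \<Psi>'\<parallel>\<^sup>2\<close>; by Hoeffding it is within
  \<open>2 \<sigma>\<^sub>P\<^sup>2 log (1 + \<epsilon>\<^sub>l)\<close> of its mean except with probability \<open>2 exp (-L \<epsilon>\<^sup>2 / 2)\<close>, and on that
  event \<open>kbar\<close> and the kernel value differ by at most \<open>\<epsilon>\<^sub>l\<close>. Integrating the conditional bound
  over \<open>W\<close> adds the two probabilities.\<close>

subsection \<open>Rows of a random matrix with i.i.d.\ entries\<close>

lemma measurable_row:
  assumes "i \<in> I"
  shows "(\<lambda>W. \<lambda>j\<in>J. W (i, j)) \<in> measurable (PiM (I \<times> J) (\<lambda>_. N)) (PiM J (\<lambda>_. N))"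
  by (rule measurable_restrict) (use assms in auto)

lemma integral_row:
  fixes g :: "('j \<Rightarrow> 'a) \<Rightarrow> real"
  assumes "i \<in> I" "prob_space N" and g: "g \<in> borel_measurable (PiM J (\<lambda>_. N))"
  shows "(\<integral>W. g (\<lambda>j\<in>J. W (i, j)) \<partial>PiM (I \<times> J) (\<lambda>_. N)) = (\<integral>r. g r \<partial>PiM J (\<lambda>_. N))"
proof -
  have "distr (PiM (I \<times> J) (\<lambda>_. N)) (PiM J (\<lambda>_. N)) (\<lambda>W. \<lambda>j\<in>J. W (i, j)) = PiM J (\<lambda>_. N)"
    using distr_PiM_reindex[of "I \<times> J" "\<lambda>_. N" "\<lambda>j. (i, j)" J] assms by (auto simp: inj_on_def)
  then show ?thesis
    using integral_distr[OF measurable_row[OF assms(1)] g] by simp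
qed

lemma indep_vars_PiM_components:
  assumes "prob_space N"
  shows "prob_space.indep_vars (PiM K (\<lambda>_. N)) (\<lambda>_. N) (\<lambda>k W. W k) K"
proof -
  interpret prob_space "PiM K (\<lambda>_. N)" by (rule prob_space_PiM) (use assms in simp)
  show ?thesis
  proof (cases "K = {}")
    case True then show ?thesis unfolding indep_vars_def2 indep_sets_def by simp
  next
    case False
    have rv: "random_variable N (\<lambda>W. W k)" if "k \<in> K" for k
      using that by (rule measurable_component_singleton)
    have "distr (PiM K (\<lambda>_. N)) (PiM K (\<lambda>_. N)) (\<lambda>W. \<lambda>k\<in>K. W k) = PiM K (\<lambda>_. N)"
      using distr_PiM_reindex[of K "\<lambda>_. N" "\<lambda>k. k" K] assms by auto
    moreover have "(\<Pi>\<^sub>M k\<in>K. distr (PiM K (\<lambda>_. N)) N (\<lambda>W. W k)) = PiM K (\<lambda>_. N)"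
      by (intro PiM_cong refl distr_PiM_component) (use assms in auto)
    ultimately show ?thesis
      by (subst indep_vars_iff_distr_eq_PiM'[OF False rv]) auto
  qed
qed

lemma row_average_hoeffding:
  fixes I :: "'i set" and J :: "'j set" and g :: "('j \<Rightarrow> 'a) \<Rightarrow> real" and a b \<epsilon> :: real
  assumes "finite I" "I \<noteq> {}" "prob_space N"
    and g: "g \<in> borel_measurable (PiM J (\<lambda>_. N))" and "\<And>r. g r \<in> {a..b}"
    and "a < b" "\<epsilon> \<ge> 0"
  shows "measure (PiM (I \<times> J) (\<lambda>_. N))
           {W \<in> space (PiM (I \<times> J) (\<lambda>_. N)).
              \<bar>(\<Sum>i\<in>I. g (\<lambda>j\<in>J. W (i, j))) / card I - (\<integral>r. g r \<partial>PiM J (\<lambda>_. N))\<bar> \<ge> \<epsilon>}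
         \<le> 2 * exp (- 2 * real (card I) * \<epsilon>\<^sup>2 / (b - a)\<^sup>2)"
proof -
  define M where "M = PiM (I \<times> J) (\<lambda>_. N)"
  define Y :: "'i \<Rightarrow> ('i \<times> 'j \<Rightarrow> 'a) \<Rightarrow> real" where "Y = (\<lambda>i W. g (\<lambda>j\<in>J. W (i, j)))"
  define \<mu> where "\<mu> = (\<integral>r. g r \<partial>PiM J (\<lambda>_. N))"
  interpret prob_space M unfolding M_def by (rule prob_space_PiM) (use assms in simp)
  have "indep_vars (\<lambda>_. N) (\<lambda>k W. W k) (I \<times> J)"
    using indep_vars_PiM_components[OF \<open>prob_space N\<close>] unfolding M_def .
  then have rows: "indep_vars (\<lambda>i. PiM ({i} \<times> J) (\<lambda>_. N)) (\<lambda>i W. restrict W ({i} \<times> J)) I"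
    by (rule indep_vars_restrict) (auto simp: disjoint_family_on_def)
  have row_eq: "(\<lambda>j\<in>J. restrict W ({i} \<times> J) (i, j)) = (\<lambda>j\<in>J. W (i, j))" for W i
    by (auto simp: restrict_def)
  have "indep_vars (\<lambda>_. borel) (\<lambda>i W. g (\<lambda>j\<in>J. restrict W ({i} \<times> J) (i, j))) I"
    by (rule indep_vars_compose2[OF rows measurable_compose[OF measurable_row g]]) simp
  then have indep: "indep_vars (\<lambda>_. borel) Y I"
    unfolding Y_def row_eq .
  have expectation_rows: "(\<Sum>i\<in>I. expectation (Y i)) = card I * \<mu>"
    unfolding Y_def M_def \<mu>_def by (simp add: integral_row[where I=I, OF _ \<open>prob_space N\<close> g])
  interpret H: Hoeffding_ineq M I Y "\<lambda>_. a" "\<lambda>_. b" "\<Sum>i\<in>I. expectation (Y i)"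
    by unfold_locales (use assms indep in \<open>auto simp: Y_def\<close>)
  have "\<bar>s / card I - \<mu>\<bar> \<ge> \<epsilon> \<longleftrightarrow> \<bar>s - card I * \<mu>\<bar> \<ge> card I * \<epsilon>" for s
    using assms by (simp add: card_gt_0_iff field_simps abs_divide flip: diff_divide_distrib)
  then have "prob {W \<in> space M. \<bar>(\<Sum>i\<in>I. Y i W) / card I - \<mu>\<bar> \<ge> \<epsilon>}
      = prob {W \<in> space M. \<bar>(\<Sum>i\<in>I. Y i W) - card I * \<mu>\<bar> \<ge> card I * \<epsilon>}"
    by simp
  also have "\<dots> \<le> 2 * exp (- 2 * (card I * \<epsilon>)\<^sup>2 / (\<Sum>i\<in>I. (b - a)\<^sup>2))"
    using H.Hoeffding_ineq_abs_ge[of "card I * \<epsilon>"] assms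
    unfolding expectation_rows by (simp add: card_gt_0_iff)
  also have "\<dots> = 2 * exp (- 2 * real (card I) * \<epsilon>\<^sup>2 / (b - a)\<^sup>2)"
    using assms by (simp add: card_gt_0_iff power2_eq_square)
  finally show ?thesis
    unfolding M_def Y_def \<mu>_def by simp
qed

abbreviation centred_normal :: "real \<Rightarrow> real measure" where
  "centred_normal \<sigma> \<equiv> density lborel (normal_density 0 \<sigma>)"

lemma distr_std_normal_scale:
  assumes "\<sigma> > 0"
  shows "distr std_normal_distribution lborel (\<lambda>x. \<sigma> * x) = centred_normal \<sigma>"
proof -
  interpret prob_space std_normal_distribution
    using real_dist_normal_dist real_distribution_def by blast
  have "distributed std_normal_distribution lborel (\<lambda>x. x) std_normal_density"
    unfolding distributed_def by (auto simp: distr_id2 cong: distr_cong)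
  then have "distributed std_normal_distribution lborel (\<lambda>x. 0 + \<sigma> * x)
      (normal_density (0 + \<sigma> * 0) (\<bar>\<sigma>\<bar> * 1))"
    by (rule normal_density_affine) (use assms in auto)
  then show ?thesis
    using assms unfolding distributed_def by simp
qed

lemma char_centred_normal:
  assumes "\<sigma> > 0"
  shows "(CLINT x|centred_normal \<sigma>. iexp (t * x)) = exp (- (\<sigma> * t)\<^sup>2 / 2)"
proof -
  have "(CLINT x|centred_normal \<sigma>. iexp (t * x)) = (CLINT y|std_normal_distribution. iexp (t * (\<sigma> * y)))"
    by (simp add: integral_distr flip: distr_std_normal_scale[OF assms])
  also have "\<dots> = char std_normal_distribution (\<sigma> * t)"
    unfolding char_def by (simp add: mult_ac)
  finally show ?thesis
    by (simp add: char_std_normal_distribution power_mult_distrib mult_ac)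
qed

lemma integral_cos_sum_centred_normal:
  assumes "finite J" "\<sigma> > 0"
  shows "(\<integral>w. cos (\<Sum>j\<in>J. w j * c j) \<partial>PiM J (\<lambda>_. centred_normal \<sigma>))
       = exp (- (\<sigma>\<^sup>2 * (\<Sum>j\<in>J. (c j)\<^sup>2)) / 2)"
proof -
  interpret product_sigma_finite "\<lambda>_. centred_normal \<sigma>"
    unfolding product_sigma_finite_def
    using prob_space_normal_density[OF assms(2)] prob_space_imp_sigma_finite by blast
  interpret N: prob_space "centred_normal \<sigma>"
    by (rule prob_space_normal_density[OF assms(2)])
  have int: "integrable (centred_normal \<sigma>) (\<lambda>x. iexp (c j * x))" for j
    by (rule N.integrable_const_bound[where B=1]) (auto simp: norm_exp_i_times)
  have "cos (\<Sum>j\<in>J. w j * c j) = Re (\<Prod>j\<in>J. iexp (c j * w j))" for w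
    using assms(1) by (simp add: Re_exp exp_sum sum_distrib_left mult_ac flip: exp_sum)
  then have "(\<integral>w. cos (\<Sum>j\<in>J. w j * c j) \<partial>PiM J (\<lambda>_. centred_normal \<sigma>))
        = Re (\<integral>w. (\<Prod>j\<in>J. iexp (c j * w j)) \<partial>PiM J (\<lambda>_. centred_normal \<sigma>))"
    using product_integrable_prod[of J "\<lambda>j x. iexp (c j * x)"] assms int by simp
  also have "\<dots> = Re (\<Prod>j\<in>J. CLINT x|centred_normal \<sigma>. iexp (c j * x))"
    using product_integral_prod[of J "\<lambda>j x. iexp (c j * x)"] assms int by simp
  also have "\<dots> = (\<Prod>j\<in>J. exp (- (\<sigma> * c j)\<^sup>2 / 2))"
    unfolding char_centred_normal[OF assms(2)] by (simp flip: of_real_prod)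
  also have "\<dots> = exp (- (\<sigma>\<^sup>2 * (\<Sum>j\<in>J. (c j)\<^sup>2)) / 2)"
    by (simp add: exp_sum[OF assms(1), symmetric] sum_distrib_left power_mult_distrib
        sum_negf flip: sum_divide_distrib)
  finally show ?thesis .
qed

lemma sum_lessThan_double:
  fixes n :: nat
  shows "(\<Sum>k<2 * n. f k) = (\<Sum>q<n. f (2 * q) + f (2 * q + 1) :: 'a::comm_monoid_add)"
  by (induction n) (simp_all add: algebra_simps)

lemma sum_lessThan_add:
  fixes n :: nat
  shows "(\<Sum>k<m + n. f k) = (\<Sum>k<m. f k) + (\<Sum>k<n. f (m + k) :: 'a::comm_monoid_add)"
  by (induction n) (simp_all add: algebra_simps)

lemma sum_cos_mult_sum_cos_plus_sum_sin_mult_sum_sin: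
  fixes f :: "'a \<Rightarrow> real" and g :: "'b \<Rightarrow> real"
  shows "(\<Sum>i\<in>A. cos (f i)) * (\<Sum>k\<in>B. cos (g k)) + (\<Sum>i\<in>A. sin (f i)) * (\<Sum>k\<in>B. sin (g k))
   = (\<Sum>i\<in>A. \<Sum>k\<in>B. cos (f i - g k))"
  unfolding cos_diff by (simp add: sum_product sum.distrib)

lemma dotp_diff_right: "dotp d w x - dotp d w y = dotp d w (\<lambda>j. x j - y j)"
  by (simp add: dotp_def right_diff_distrib sum_subtractf)

subsection \<open>Random Fourier features of the Gaussian kernel\<close>

lemma rff_inner_eq_average_cos:
  "(\<Sum>k<2 * Q. rff m Q V u k * rff m Q V u' k)
   = (\<Sum>q<Q. cos (dotp m (\<lambda>j. V (q, j)) (\<lambda>j. u j - u' j))) / Q"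
proof -
  have "rff m Q V u (2 * q) * rff m Q V u' (2 * q) + rff m Q V u (2 * q + 1) * rff m Q V u' (2 * q + 1)
      = cos (dotp m (\<lambda>j. V (q, j)) u - dotp m (\<lambda>j. V (q, j)) u') / Q" for q
    unfolding rff_def Let_def by (simp add: cos_diff add_divide_distrib)
  then show ?thesis
    unfolding sum_lessThan_double dotp_diff_right by (simp add: sum_divide_distrib)
qed

lemma rff_gauss_kernel_concentration:
  assumes "Q > 0" "s > 0" "\<epsilon> \<ge> 0"
  shows "measure (PiM ({..<Q} \<times> {..<m}) (\<lambda>_. centred_normal (1 / s)))
     {V \<in> space (PiM ({..<Q} \<times> {..<m}) (\<lambda>_. centred_normal (1 / s))).
        \<bar>(\<Sum>k<2 * Q. rff m Q V u k * rff m Q V u' k) - gauss_kernel m s u u'\<bar> \<ge> \<epsilon>}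
   \<le> 2 * exp (- real Q * \<epsilon>\<^sup>2 / 2)"
proof -
  define g where "g w = cos (dotp m w (\<lambda>j. u j - u' j))" for w
  have [measurable]: "g \<in> borel_measurable (PiM {..<m} (\<lambda>_. centred_normal (1 / s)))"
    unfolding g_def dotp_def by measurable
  have g_bounds: "g w \<in> {- 1..1}" for w
    by (simp add: g_def)
  have average: "(\<Sum>k<2 * Q. rff m Q V u k * rff m Q V u' k)
      = (\<Sum>q\<in>{..<Q}. g (\<lambda>j\<in>{..<m}. V (q, j))) / card {..<Q}" for V
    unfolding rff_inner_eq_average_cos g_def dotp_def by simp
  have mean: "(\<integral>w. g w \<partial>PiM {..<m} (\<lambda>_. centred_normal (1 / s))) = gauss_kernel m s u u'"
    unfolding g_def dotp_def gauss_kernel_def sqdist_def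
    using assms by (simp add: integral_cos_sum_centred_normal power_divide)
  have "measure (PiM ({..<Q} \<times> {..<m}) (\<lambda>_. centred_normal (1 / s)))
     {V \<in> space (PiM ({..<Q} \<times> {..<m}) (\<lambda>_. centred_normal (1 / s))).
        \<bar>(\<Sum>q\<in>{..<Q}. g (\<lambda>j\<in>{..<m}. V (q, j))) / card {..<Q}
          - (\<integral>w. g w \<partial>PiM {..<m} (\<lambda>_. centred_normal (1 / s)))\<bar> \<ge> \<epsilon>}
     \<le> 2 * exp (- 2 * real (card {..<Q}) * \<epsilon>\<^sup>2 / (1 - (- 1))\<^sup>2)"
    by (rule row_average_hoeffding) (use assms g_bounds in \<open>auto simp: prob_space_normal_density\<close>)
  then show ?thesis
    unfolding average mean by (simp add: power2_eq_square mult_ac)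
qed

subsection \<open>Random features of the kernel mean embedding\<close>

text \<open>The squared modulus of the difference of the empirical characteristic functions
  of the samples \<open>X\<close> and \<open>X'\<close> at the frequency \<open>w\<close>, written in real coordinates.\<close>
definition ecf_sqdist :: "nat \<Rightarrow> nat \<Rightarrow> (nat \<Rightarrow> nat \<Rightarrow> real) \<Rightarrow> nat \<Rightarrow> (nat \<Rightarrow> nat \<Rightarrow> real)
    \<Rightarrow> (nat \<Rightarrow> real) \<Rightarrow> real" where
  "ecf_sqdist d n1 X n2 X' w =
     ((\<Sum>i<n1. cos (dotp d w (X i))) / n1 - (\<Sum>i<n2. cos (dotp d w (X' i))) / n2)\<^sup>2
   + ((\<Sum>i<n1. sin (dotp d w (X i))) / n1 - (\<Sum>i<n2. sin (dotp d w (X' i))) / n2)\<^sup>2"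

definition cos_pair_sum :: "nat \<Rightarrow> nat \<Rightarrow> (nat \<Rightarrow> nat \<Rightarrow> real) \<Rightarrow> nat \<Rightarrow> (nat \<Rightarrow> nat \<Rightarrow> real)
    \<Rightarrow> (nat \<Rightarrow> real) \<Rightarrow> real" where
  "cos_pair_sum d n1 X n2 X' w = (\<Sum>i<n1. \<Sum>k<n2. cos (dotp d w (\<lambda>j. X i j - X' k j)))"

lemma ZP_sqdist_eq_average_ecf_sqdist:
  "(\<Sum>k<2 * L. (ZP d L W n1 X k - ZP d L W n2 X' k)\<^sup>2)
   = (\<Sum>l<L. ecf_sqdist d n1 X n2 X' (\<lambda>j. W (l, j))) / L"
proof -
  have ZP_cos: "ZP d L W n X (2 * l) = ((\<Sum>i<n. cos (dotp d (\<lambda>j. W (l, j)) (X i))) / n) / sqrt L"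
    and ZP_sin: "ZP d L W n X (2 * l + 1) = ((\<Sum>i<n. sin (dotp d (\<lambda>j. W (l, j)) (X i))) / n) / sqrt L"
    for n X l
    unfolding ZP_def rff_def Let_def by (simp_all flip: sum_divide_distrib)
  have square: "(a / sqrt L)\<^sup>2 = a\<^sup>2 / L" for a
    by (simp add: power_divide)
  have "(ZP d L W n1 X (2 * l) - ZP d L W n2 X' (2 * l))\<^sup>2
      + (ZP d L W n1 X (2 * l + 1) - ZP d L W n2 X' (2 * l + 1))\<^sup>2
      = ecf_sqdist d n1 X n2 X' (\<lambda>j. W (l, j)) / L" for l
    unfolding ZP_cos ZP_sin ecf_sqdist_def diff_divide_distrib[symmetric] square
    by (simp add: add_divide_distrib)
  then show ?thesis
    unfolding sum_lessThan_double by (simp add: sum_divide_distrib)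
qed

lemma ecf_sqdist_eq_cos_pair_sums:
  "ecf_sqdist d n1 X n2 X' w =
     cos_pair_sum d n1 X n1 X w / (n1 * n1) + cos_pair_sum d n2 X' n2 X' w / (n2 * n2)
     - 2 * cos_pair_sum d n1 X n2 X' w / (n1 * n2)"
proof -
  have square_expansion: "(p / a - q / b)\<^sup>2 + (r / a - t / b)\<^sup>2
      = (p * p + r * r) / (a * a) + (q * q + t * t) / (b * b) - 2 * (p * q + r * t) / (a * b)"
    for p q r t a b :: real
    by (simp add: power2_eq_square divide_inverse algebra_simps)
  show ?thesis
    unfolding ecf_sqdist_def square_expansion cos_pair_sum_def
      sum_cos_mult_sum_cos_plus_sum_sin_mult_sum_sin dotp_diff_right[symmetric] by simp
qed

lemma integrable_cos_dotp_centred_normal: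
  assumes "\<sigma> > 0"
  shows "integrable (PiM {..<d} (\<lambda>_. centred_normal \<sigma>)) (\<lambda>w. cos (dotp d w c))"
proof -
  interpret prob_space "PiM {..<d} (\<lambda>_. centred_normal \<sigma>)"
    by (rule prob_space_PiM) (use assms in \<open>simp add: prob_space_normal_density\<close>)
  show ?thesis
    by (rule integrable_const_bound[where B=1]) (auto simp: dotp_def)
qed

lemma integral_cos_pair_sum:
  assumes "s > 0"
  shows "(\<integral>w. cos_pair_sum d n1 X n2 X' w \<partial>PiM {..<d} (\<lambda>_. centred_normal (1 / s)))
       = (\<Sum>i<n1. \<Sum>k<n2. gauss_kernel d s (X i) (X' k))"
proof -
  have "1 / s > 0"
    using assms by simp
  then show ?thesis
    using assms integrable_cos_dotp_centred_normal unfolding cos_pair_sum_def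
    by (simp add: dotp_def gauss_kernel_def sqdist_def integral_cos_sum_centred_normal power_divide)
      (simp add: mult.commute)
qed

lemma integral_ecf_sqdist:
  assumes "s > 0"
  shows "(\<integral>w. ecf_sqdist d n1 X n2 X' w \<partial>PiM {..<d} (\<lambda>_. centred_normal (1 / s)))
       = kme_sqdist d s n1 X n2 X'"
proof -
  have "integrable (PiM {..<d} (\<lambda>_. centred_normal (1 / s))) (cos_pair_sum d m Y m' Y')"
    for m Y m' Y'
    unfolding cos_pair_sum_def
    by (intro Bochner_Integration.integrable_sum integrable_cos_dotp_centred_normal) (use assms in simp)
  then show ?thesis
    unfolding ecf_sqdist_eq_cos_pair_sums kme_sqdist_def kme_inner_def
    using assms by (simp add: integral_cos_pair_sum)
qed

lemma abs_average_le_1: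
  fixes f :: "nat \<Rightarrow> real"
  assumes "n > 0" "\<And>i. \<bar>f i\<bar> \<le> 1"
  shows "\<bar>(\<Sum>i<n. f i) / n\<bar> \<le> 1"
proof -
  have "\<bar>\<Sum>i<n. f i\<bar> \<le> (\<Sum>i<n. \<bar>f i\<bar>)"
    by (rule sum_abs)
  also have "\<dots> \<le> (\<Sum>i<n. 1)"
    by (rule sum_mono) (rule assms(2))
  finally show ?thesis
    using assms(1) by (simp add: abs_divide)
qed

lemma ecf_sqdist_bounds:
  assumes "n1 > 0" "n2 > 0"
  shows "ecf_sqdist d n1 X n2 X' w \<in> {0..8}"
proof -
  have square_le_4: "(a - b)\<^sup>2 \<le> 4" if "\<bar>a\<bar> \<le> 1" "\<bar>b\<bar> \<le> 1" for a b :: real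
    using abs_square_le_1[of "(a - b) / 2"] that by (simp add: power_divide abs_le_iff)
  show ?thesis
    unfolding ecf_sqdist_def atLeastAtMost_iff
    by (intro conjI add_nonneg_nonneg zero_le_power2 order_trans[OF add_mono[OF square_le_4 square_le_4]]
        abs_average_le_1 assms) simp_all
qed

lemma ZP_sqdist_concentration:
  assumes "n1 > 0" "n2 > 0" "L > 0" "s > 0" "\<epsilon> \<ge> 0"
  shows "measure (PiM ({..<L} \<times> {..<d}) (\<lambda>_. centred_normal (1 / s)))
     {W \<in> space (PiM ({..<L} \<times> {..<d}) (\<lambda>_. centred_normal (1 / s))).
        \<bar>(\<Sum>k<2 * L. (ZP d L W n1 X k - ZP d L W n2 X' k)\<^sup>2) - kme_sqdist d s n1 X n2 X'\<bar> \<ge> \<epsilon>}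
   \<le> 2 * exp (- real L * \<epsilon>\<^sup>2 / 32)"
proof -
  define g where "g = ecf_sqdist d n1 X n2 X'"
  have [measurable]: "g \<in> borel_measurable (PiM {..<d} (\<lambda>_. centred_normal (1 / s)))"
    unfolding g_def ecf_sqdist_def[abs_def] dotp_def by measurable
  have g_bounds: "g w \<in> {0..8}" for w
    unfolding g_def by (rule ecf_sqdist_bounds[OF assms(1,2)])
  have average: "(\<Sum>k<2 * L. (ZP d L W n1 X k - ZP d L W n2 X' k)\<^sup>2)
      = (\<Sum>l\<in>{..<L}. g (\<lambda>j\<in>{..<d}. W (l, j))) / card {..<L}" for W
    unfolding ZP_sqdist_eq_average_ecf_sqdist g_def ecf_sqdist_def dotp_def by simp
  have "measure (PiM ({..<L} \<times> {..<d}) (\<lambda>_. centred_normal (1 / s)))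
     {W \<in> space (PiM ({..<L} \<times> {..<d}) (\<lambda>_. centred_normal (1 / s))).
        \<bar>(\<Sum>l\<in>{..<L}. g (\<lambda>j\<in>{..<d}. W (l, j))) / card {..<L}
          - (\<integral>w. g w \<partial>PiM {..<d} (\<lambda>_. centred_normal (1 / s)))\<bar> \<ge> \<epsilon>}
     \<le> 2 * exp (- 2 * real (card {..<L}) * \<epsilon>\<^sup>2 / (8 - 0)\<^sup>2)"
    by (rule row_average_hoeffding)
      (use assms g_bounds in \<open>auto simp: prob_space_normal_density\<close>)
  then show ?thesis
    unfolding average g_def integral_ecf_sqdist[OF assms(4)] by (simp add: power2_eq_square mult_ac)
qed

subsection \<open>The two-stage kernel\<close>

lemma sqdist_uvec:
  "sqdist (2 * L + d) (uvec d L sP sX W n1 X x) (uvec d L sP sX W n2 X' x')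
   = sX\<^sup>2 * (\<Sum>k<2 * L. (ZP d L W n1 X k - ZP d L W n2 X' k)\<^sup>2) + sP\<^sup>2 * sqdist d x x'"
  unfolding sqdist_def sum_lessThan_add uvec_def
  by (simp add: sum_distrib_left power_mult_distrib flip: right_diff_distrib)

lemma gauss_kernel_uvec:
  assumes "sP > 0" "sX > 0"
  shows "gauss_kernel (2 * L + d) (sP * sX) (uvec d L sP sX W n1 X x) (uvec d L sP sX W n2 X' x')
       = exp (- (\<Sum>k<2 * L. (ZP d L W n1 X k - ZP d L W n2 X' k)\<^sup>2) / (2 * sP\<^sup>2))
         * exp (- sqdist d x x' / (2 * sX\<^sup>2))"
  unfolding gauss_kernel_def sqdist_uvec
  using assms by (simp add: power_mult_distrib add_divide_distrib field_simps flip: exp_add)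

lemma abs_exp_neg_mult_diff_le:
  fixes a b c e :: real
  assumes "a \<ge> 0" "\<bar>a - b\<bar> < ln (1 + e)" "e > 0" "c \<in> {0..1}"
  shows "\<bar>exp (- b) * c - exp (- a) * c\<bar> \<le> e"
proof -
  have upper: "exp (a - b) < 1 + e" and "exp (b - a) < 1 + e"
    using assms(2,3) exp_less_mono[of _ "ln (1 + e)"] by (simp_all add: abs_less_iff)
  have "1 = exp (b - a) * exp (a - b)"
    by (simp flip: exp_add)
  also have "\<dots> < (1 + e) * exp (a - b)"
    using \<open>exp (b - a) < 1 + e\<close> by (rule mult_strict_right_mono) simp
  finally have "1 < (1 + e) * exp (a - b)" .
  have lower: "1 - e < exp (a - b)"
  proof (rule ccontr)
    assume "\<not> 1 - e < exp (a - b)"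
    then have "(1 + e) * exp (a - b) \<le> (1 + e) * (1 - e)"
      using assms(3) by (intro mult_left_mono) auto
    then show False
      using \<open>1 < (1 + e) * exp (a - b)\<close> zero_le_square[of e] by (simp add: algebra_simps)
  qed
  have "\<bar>exp (a - b) - 1\<bar> \<le> e"
    using upper lower by (simp add: abs_le_iff)
  moreover have "\<bar>exp (- a) * c\<bar> \<le> 1"
    using assms(1,4) by (simp add: mult_le_one)
  moreover have "exp (- b) * c - exp (- a) * c = exp (- a) * c * (exp (a - b) - 1)"
    by (simp add: algebra_simps flip: exp_add)
  ultimately show ?thesis
    using mult_mono[of "\<bar>exp (- a) * c\<bar>" 1 "\<bar>exp (a - b) - 1\<bar>" e] by (simp add: abs_mult)
qed

lemma kbar_approx_gauss_kernel_uvec: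
  assumes "sP > 0" "sX > 0" "eps > 0"
    and "\<bar>(\<Sum>k<2 * L. (ZP d L W n1 X k - ZP d L W n2 X' k)\<^sup>2) - kme_sqdist d s' n1 X n2 X'\<bar>
           < 2 * sP\<^sup>2 * ln (1 + eps)"
  shows "\<bar>kbar d s' sP sX n1 X x n2 X' x'
          - gauss_kernel (2 * L + d) (sP * sX) (uvec d L sP sX W n1 X x) (uvec d L sP sX W n2 X' x')\<bar>
         \<le> eps"
proof -
  have "0 \<le> sqdist d x x'"
    unfolding sqdist_def by (simp add: sum_nonneg)
  then have "exp (- sqdist d x x' / (2 * sX\<^sup>2)) \<in> {0..1}"
    by simp
  moreover have "\<bar>(\<Sum>k<2 * L. (ZP d L W n1 X k - ZP d L W n2 X' k)\<^sup>2) / (2 * sP\<^sup>2)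
      - kme_sqdist d s' n1 X n2 X' / (2 * sP\<^sup>2)\<bar> < ln (1 + eps)"
    using assms(1,4) by (simp add: abs_divide field_simps flip: diff_divide_distrib)
  ultimately show ?thesis
    unfolding kbar_def gauss_kernel_uvec[OF assms(1,2)]
    using abs_exp_neg_mult_diff_le[OF _ _ assms(3)] by (simp add: sum_nonneg)
qed

subsection \<open>Conditioning on the first factor of a product\<close>

lemma (in pair_prob_space) measure_pair_le_bad_sections:
  assumes "A \<in> sets M1" "c \<ge> 0"
    and "\<And>x. x \<in> space M1 - A \<Longrightarrow> B x \<in> sets M2"
    and "\<And>x. x \<in> space M1 - A \<Longrightarrow> measure M2 (B x) \<le> c"
    and "\<And>x y. x \<in> space M1 - A \<Longrightarrow> (x, y) \<in> E \<Longrightarrow> y \<in> B x"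
  shows "measure (M1 \<Otimes>\<^sub>M M2) E \<le> measure M1 A + c"
proof (cases "E \<in> sets (M1 \<Otimes>\<^sub>M M2)")
  case False
  then show ?thesis
    using assms(2) by (simp add: measure_notin_sets)
next
  case True
  have "emeasure M2 (Pair x -` E) \<le> indicator A x + ennreal c" if "x \<in> space M1" for x
  proof (cases "x \<in> A")
    case True
    then show ?thesis
      using M2.emeasure_le_1[of "Pair x -` E"] by (simp add: add_increasing2)
  next
    case False
    then have "emeasure M2 (Pair x -` E) \<le> emeasure M2 (B x)"
      using that assms(3,5) by (intro emeasure_mono) auto
    also have "\<dots> \<le> ennreal c"
      using that False assms(4) by (simp add: M2.emeasure_eq_measure ennreal_leI)
    finally show ?thesis
      using False by simp
  qed
  then have "emeasure (M1 \<Otimes>\<^sub>M M2) E \<le> (\<integral>\<^sup>+x. (indicator A x + ennreal c) \<partial>M1)"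
    unfolding M2.emeasure_pair_measure_alt[OF True] by (rule nn_integral_mono)
  also have "\<dots> = ennreal (measure M1 A + c)"
    using assms(1,2)
    by (simp add: nn_integral_add M1.emeasure_space_1 M1.emeasure_eq_measure M1.prob_space ennreal_plus)
  finally show ?thesis
    using assms(2) by (simp add: emeasure_eq_measure ennreal_plus[symmetric] del: ennreal_plus)
qed

theorem theorem6p2:
  fixes d n1 n2 L Q :: nat
    and X X' :: "nat \<Rightarrow> nat \<Rightarrow> real"
    and x x' :: "nat \<Rightarrow> real"
    and s' sP sX eps_l eps_q :: real
  assumes "n1 > 0" and "n2 > 0" and "L > 0" and "Q > 0"
    and "s' > 0" and "sP > 0" and "sX > 0"
    and "eps_l > 0" and "eps_q > 0"
  shows
    "measure (rf_measure d L Q s' sP sX)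
       {(W, V) \<in> space (rf_measure d L Q s' sP sX).
          \<bar>kbar d s' sP sX n1 X x n2 X' x'
            - (\<Sum>k<2 * Q. rff (2 * L + d) Q V (uvec d L sP sX W n1 X x) k
                          * rff (2 * L + d) Q V (uvec d L sP sX W n2 X' x') k)\<bar>
          \<ge> eps_l + eps_q}
     \<le> 2 * exp (- real Q * eps_q^2 / 2)
       + 6 * real n1 * real n2 * exp (- real L * ((sP^2 / 2) * ln (1 + eps_l))^2 / 2)"
proof -
  define MW where "MW = PiM ({..<L} \<times> {..<d}) (\<lambda>_. centred_normal (1 / s'))"
  define MV where "MV = PiM ({..<Q} \<times> {..<2 * L + d}) (\<lambda>_. centred_normal (1 / (sP * sX)))"
  interpret pair_prob_space MW MV
    unfolding MW_def MV_def pair_prob_space_def pair_sigma_finite_def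
    using assms by (auto intro!: prob_space_PiM prob_space_normal_density prob_space_imp_sigma_finite)
  define T where "T W V = (\<Sum>k<2 * Q. rff (2 * L + d) Q V (uvec d L sP sX W n1 X x) k
                          * rff (2 * L + d) Q V (uvec d L sP sX W n2 X' x') k)" for W V
  define t where "t = 2 * sP\<^sup>2 * ln (1 + eps_l)"
  define A where "A = {W \<in> space MW. \<bar>(\<Sum>k<2 * L. (ZP d L W n1 X k - ZP d L W n2 X' k)\<^sup>2)
                                      - kme_sqdist d s' n1 X n2 X'\<bar> \<ge> t}"
  define B where "B W = {V \<in> space MV. \<bar>T W V - gauss_kernel (2 * L + d) (sP * sX)
                     (uvec d L sP sX W n1 X x) (uvec d L sP sX W n2 X' x')\<bar> \<ge> eps_q}" for W
  have "measure (MW \<Otimes>\<^sub>M MV) {(W, V) \<in> space (MW \<Otimes>\<^sub>M MV).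
          \<bar>kbar d s' sP sX n1 X x n2 X' x' - T W V\<bar> \<ge> eps_l + eps_q}
      \<le> measure MW A + 2 * exp (- real Q * eps_q\<^sup>2 / 2)"
  proof (rule measure_pair_le_bad_sections)
    show "A \<in> sets MW" "B W \<in> sets MV" for W
      unfolding A_def B_def MW_def MV_def T_def ZP_def rff_def Let_def dotp_def by measurable
    show "measure MV (B W) \<le> 2 * exp (- real Q * eps_q\<^sup>2 / 2)" for W
      unfolding B_def MV_def T_def using assms by (intro rff_gauss_kernel_concentration) auto
    show "V \<in> B W" if "W \<in> space MW - A" and "(W, V) \<in> {(W, V) \<in> space (MW \<Otimes>\<^sub>M MV).
        \<bar>kbar d s' sP sX n1 X x n2 X' x' - T W V\<bar> \<ge> eps_l + eps_q}" for W V
      using that kbar_approx_gauss_kernel_uvec[OF assms(6,7,8), of d L W n1 X n2 X' s' x x']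
      unfolding A_def B_def t_def by (auto simp: space_pair_measure)
  qed simp
  also have "measure MW A \<le> 2 * exp (- real L * t\<^sup>2 / 32)"
    unfolding A_def MW_def using assms by (intro ZP_sqdist_concentration) (auto simp: t_def)
  also have "\<dots> = 2 * exp (- real L * ((sP^2 / 2) * ln (1 + eps_l))^2 / 2)"
    unfolding t_def by (simp add: power_mult_distrib power_divide)
  also have "\<dots> \<le> 6 * real n1 * real n2 * exp (- real L * ((sP^2 / 2) * ln (1 + eps_l))^2 / 2)"
    using assms mult_mono[of 1 "real n1" 1 "real n2"] by (intro mult_right_mono) auto
  finally show ?thesis
    unfolding rf_measure_def MW_def MV_def T_def by simp
qed

end
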